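(* Let $\Omega=(a,b)\subset\mathbb{R}$ be a bounded interval with $a=kh$, $b=lh$ for a mesh size $h>0$ and integers $k,l$ with $l-k>1$. Then $$\sum_{x\in\Omega_h}\frac{u(x)^2}{\operatorname{dist}(x,\partial\Omega_h)^2}\le4\sum_{x\in\overline{\Omega}_h\setminus\partial^+\Omega_h}\big(D_h^+u(x)\big)^2$$ for all $u\in W_0^{1,2}(\overline{\Omega}_h)$.
   Context: $\overline{\Omega}_h=[a,b]\cap h\mathbb{Z}$, $\Omega_h=(a,b)\cap h\mathbb{Z}$, $\partial\Omega_h=\{a,b\}$, $\partial^+\Omega_h=\{b\}$, $D_h^+u(x)=\frac{u(x+h)-u(x)}{h}$. $W_0^{1,2}(\overline{\Omega}_h)$ is the set of $u:\overline{\Omega}_h\to\mathbb{R}$ with $u(a)=u(b)=0$. $\operatorname{dist}(x,\partial\Omega_h)=\min\{x-a,b-x\}$. *)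

theory Defs
  imports "HOL-Analysis.Analysis"
begin

definition grid :: "real \<Rightarrow> real set" where
  "grid h = {x. \<exists>j::int. x = of_int j * h}"

definition closed_grid :: "real \<Rightarrow> real \<Rightarrow> real \<Rightarrow> real set" where
  "closed_grid h a b = {a..b} \<inter> grid h"

definition open_grid :: "real \<Rightarrow> real \<Rightarrow> real \<Rightarrow> real set" where
  "open_grid h a b = {a<..<b} \<inter> grid h"

definition bdry_grid :: "real \<Rightarrow> real \<Rightarrow> real set" where
  "bdry_grid a b = {a, b}"

definition bdry_plus_grid :: "real \<Rightarrow> real set" where
  "bdry_plus_grid b = {b}"

definition fwd_diff :: "real \<Rightarrow> (real \<Rightarrow> real) \<Rightarrow> real \<Rightarrow> real" where
  "fwd_diff h u x = (u (x + h) - u x) / h"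

definition W012_0 :: "real \<Rightarrow> real \<Rightarrow> real \<Rightarrow> (real \<Rightarrow> real) set" where
  "W012_0 h a b = {u. u a = 0 \<and> u b = 0}"

definition dist_bdry :: "real \<Rightarrow> real \<Rightarrow> real \<Rightarrow> real" where
  "dist_bdry a b x = min (x - a) (b - x)"

end

theory Submission
  imports Defs
begin

text \<open>
  One-sided discrete Hardy inequality: if \<open>f 0 = 0\<close> then
  \<open>\<Sum>\<^sub>n\<^sub>=\<^sub>1\<^sup>m f(n)\<^sup>2/n\<^sup>2 \<le> 4 \<Sum>\<^sub>n\<^sub><\<^sub>m (f(n+1) - f(n))\<^sup>2\<close>.
  It is proved by induction in the sharper form with the extra term \<open>2 f(m)\<^sup>2/m\<close> on the
  left, whose induction step is a single quadratic inequality. Splitting the grid at its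
  midpoint, the left half is this inequality and the right half is its reflection, so the
  two sums of squared differences add up to the full Dirichlet sum; the mesh size
  scales out by \<open>h\<^sup>2\<close> on both sides.
\<close>

text \<open>With \<open>x = f(n)/n\<close> and \<open>y = f(n-1)/(n-1)\<close> this is the induction step below.\<close>
lemma hardy_step_ineq:
  fixes n x y :: real
  assumes "n \<ge> 1"
  shows "x\<^sup>2 + 2*n*x\<^sup>2 - 2*(n - 1)*y\<^sup>2 \<le> 4*(n*x - (n - 1)*y)\<^sup>2"
proof -
  define A where "A = 4*n\<^sup>2 - 2*n - 1"
  have "n\<^sup>2 \<ge> n" using assms by (simp add: power2_eq_square)
  then have A_pos: "A > 0" using assms unfolding A_def by linarith
  have "A * (4*(n*x - (n - 1)*y)\<^sup>2 - (x\<^sup>2 + 2*n*x\<^sup>2 - 2*(n - 1)*y\<^sup>2))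
      = (A*x - 4*n*(n - 1)*y)\<^sup>2 + 2*(n - 1)*y\<^sup>2"
    unfolding A_def by (simp add: algebra_simps power2_eq_square)
  also have "\<dots> \<ge> 0" using assms by simp
  finally show ?thesis using A_pos by (simp add: zero_le_mult_iff)
qed

lemma discrete_hardy_with_remainder:
  fixes f :: "nat \<Rightarrow> real"
  assumes "f 0 = 0"
  shows "(\<Sum>n\<in>{1..m}. (f n)\<^sup>2 / (real n)\<^sup>2) + 2*(f m)\<^sup>2 / real m
           \<le> 4 * (\<Sum>n<m. (f (Suc n) - f n)\<^sup>2)"
proof (induction m)
  case 0
  then show ?case by simp
next
  case (Suc m)
  define x y where "x = f (Suc m) / real (Suc m)" and "y = f m / real m"
  have fx: "f (Suc m) = real (Suc m) * x"
    by (simp add: x_def)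
  have fy: "f m = real m * y"
    using assms by (cases "m = 0") (simp_all add: y_def)
  have "(f (Suc m))\<^sup>2 / (real (Suc m))\<^sup>2 = x\<^sup>2"
    by (simp add: fx power_mult_distrib)
  moreover have "2*(f (Suc m))\<^sup>2 / real (Suc m) = 2*real (Suc m)*x\<^sup>2"
    by (simp add: fx power2_eq_square)
  moreover have "2*(f m)\<^sup>2 / real m = 2*(real (Suc m) - 1)*y\<^sup>2"
    by (cases "m = 0") (simp_all add: fy power2_eq_square)
  moreover have "f (Suc m) - f m = real (Suc m)*x - (real (Suc m) - 1)*y"
    by (simp add: fx fy)
  ultimately have "(f (Suc m))\<^sup>2 / (real (Suc m))\<^sup>2 + 2*(f (Suc m))\<^sup>2 / real (Suc m)
                     - 2*(f m)\<^sup>2 / real m \<le> 4*(f (Suc m) - f m)\<^sup>2"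
    using hardy_step_ineq[of "real (Suc m)" x y] by simp
  then show ?case using Suc.IH by simp
qed

lemma discrete_hardy:
  fixes f :: "nat \<Rightarrow> real"
  assumes "f 0 = 0"
  shows "(\<Sum>n\<in>{1..m}. (f n)\<^sup>2 / (real n)\<^sup>2) \<le> 4 * (\<Sum>n<m. (f (Suc n) - f n)\<^sup>2)"
proof -
  have "2*(f m)\<^sup>2 / real m \<ge> 0" by simp
  then show ?thesis using discrete_hardy_with_remainder[of f m] assms by linarith
qed

lemma discrete_hardy_reflected:
  fixes v :: "nat \<Rightarrow> real"
  assumes "v N = 0" and "m \<le> N"
  shows "(\<Sum>n\<in>{m..<N}. (v n)\<^sup>2 / (real N - real n)\<^sup>2)
           \<le> 4 * (\<Sum>n\<in>{m..<N}. (v (Suc n) - v n)\<^sup>2)"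
proof -
  have "(\<Sum>n\<in>{m..<N}. (v n)\<^sup>2 / (real N - real n)\<^sup>2)
      = (\<Sum>j\<in>{1..N - m}. (v (N - j))\<^sup>2 / (real j)\<^sup>2)"
    by (rule sum.reindex_bij_witness[of _ "\<lambda>j. N - j" "\<lambda>n. N - n"]) (auto simp: of_nat_diff)
  also have "\<dots> \<le> 4 * (\<Sum>j<N - m. (v (N - Suc j) - v (N - j))\<^sup>2)"
    using discrete_hardy[of "\<lambda>j. v (N - j)" "N - m"] assms(1) by simp
  also have "(\<Sum>j<N - m. (v (N - Suc j) - v (N - j))\<^sup>2) = (\<Sum>n\<in>{m..<N}. (v (Suc n) - v n)\<^sup>2)"
    by (rule sum.reindex_bij_witness[of _ "\<lambda>n. N - Suc n" "\<lambda>j. N - Suc j"])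
       (auto simp: power2_commute Suc_diff_Suc)
  finally show ?thesis .
qed

lemma discrete_hardy_dirichlet:
  fixes v :: "nat \<Rightarrow> real"
  assumes "v 0 = 0" and "v N = 0"
  shows "(\<Sum>n\<in>{1..<N}. (v n)\<^sup>2 / (min (real n) (real N - real n))\<^sup>2)
           \<le> 4 * (\<Sum>n<N. (v (Suc n) - v n)\<^sup>2)"
proof -
  define m where "m = N div 2"
  define w where "w n = (v n)\<^sup>2 / (min (real n) (real N - real n))\<^sup>2" for n
  have "(\<Sum>n\<in>{1..m}. w n) = (\<Sum>n\<in>{1..m}. (v n)\<^sup>2 / (real n)\<^sup>2)"
    by (rule sum.cong) (auto simp: w_def m_def)
  also have "\<dots> \<le> 4 * (\<Sum>n<m. (v (Suc n) - v n)\<^sup>2)"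
    using discrete_hardy assms(1) .
  finally have left: "(\<Sum>n\<in>{1..m}. w n) \<le> 4 * (\<Sum>n<m. (v (Suc n) - v n)\<^sup>2)" .
  have "(\<Sum>n\<in>{Suc m..<N}. w n) = (\<Sum>n\<in>{Suc m..<N}. (v n)\<^sup>2 / (real N - real n)\<^sup>2)"
    by (rule sum.cong) (auto simp: w_def m_def)
  also have "\<dots> \<le> (\<Sum>n\<in>{m..<N}. (v n)\<^sup>2 / (real N - real n)\<^sup>2)"
    by (rule sum_mono2) auto
  also have "\<dots> \<le> 4 * (\<Sum>n\<in>{m..<N}. (v (Suc n) - v n)\<^sup>2)"
    using discrete_hardy_reflected assms(2) by (simp add: m_def)
  finally have right: "(\<Sum>n\<in>{Suc m..<N}. w n) \<le> 4 * (\<Sum>n\<in>{m..<N}. (v (Suc n) - v n)\<^sup>2)" .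
  have "{1..<N} = {1..m} \<union> {Suc m..<N}" and "{..<N} = {..<m} \<union> {m..<N}"
    by (auto simp: m_def)
  then have "(\<Sum>n\<in>{1..<N}. w n) = (\<Sum>n\<in>{1..m}. w n) + (\<Sum>n\<in>{Suc m..<N}. w n)"
    and "(\<Sum>n<N. (v (Suc n) - v n)\<^sup>2)
           = (\<Sum>n<m. (v (Suc n) - v n)\<^sup>2) + (\<Sum>n\<in>{m..<N}. (v (Suc n) - v n)\<^sup>2)"
    by (auto intro: sum.union_disjoint)
  with left right show ?thesis unfolding w_def by linarith
qed

definition grid_node :: "real \<Rightarrow> int \<Rightarrow> nat \<Rightarrow> real" where
  "grid_node h k n = of_int (k + int n) * h"

lemma inj_grid_node: "h \<noteq> 0 \<Longrightarrow> inj (grid_node h k)"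
  by (auto simp: inj_def grid_node_def)

lemma grid_node_Suc: "grid_node h k (Suc n) = grid_node h k n + h"
  by (simp add: grid_node_def algebra_simps)

lemma grid_node_in_grid: "grid_node h k n \<in> grid h"
  unfolding grid_node_def grid_def by blast

lemma open_grid_eq_grid_nodes:
  assumes "h > 0"
  shows "open_grid h (of_int k * h) (of_int (k + int N) * h) = grid_node h k ` {1..<N}"
proof -
  have "x \<in> open_grid h (of_int k * h) (of_int (k + int N) * h) \<longleftrightarrow> x \<in> grid_node h k ` {1..<N}" for x
  proof
    assume "x \<in> open_grid h (of_int k * h) (of_int (k + int N) * h)"
    then obtain j :: int where "x = of_int j * h" "k < j" "j < k + int N"
      using assms by (auto simp: open_grid_def grid_def)
    then show "x \<in> grid_node h k ` {1..<N}"
      by (auto simp: grid_node_def image_iff intro!: bexI[of _ "nat (j - k)"])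
  qed (use assms grid_node_in_grid in \<open>auto simp: open_grid_def grid_node_def\<close>)
  then show ?thesis by blast
qed

lemma closed_grid_minus_right_eq_grid_nodes:
  assumes "h > 0"
  shows "closed_grid h (of_int k * h) (of_int (k + int N) * h) - bdry_plus_grid (of_int (k + int N) * h)
           = grid_node h k ` {..<N}"
proof -
  have "x \<in> closed_grid h (of_int k * h) (of_int (k + int N) * h) - bdry_plus_grid (of_int (k + int N) * h)
          \<longleftrightarrow> x \<in> grid_node h k ` {..<N}" for x
  proof
    assume "x \<in> closed_grid h (of_int k * h) (of_int (k + int N) * h) - bdry_plus_grid (of_int (k + int N) * h)"
    then obtain j :: int where "x = of_int j * h" "k \<le> j" "j < k + int N"
      using assms by (auto simp: closed_grid_def bdry_plus_grid_def grid_def)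
    then show "x \<in> grid_node h k ` {..<N}"
      by (auto simp: grid_node_def image_iff intro!: bexI[of _ "nat (j - k)"])
  qed (use assms grid_node_in_grid in \<open>auto simp: closed_grid_def bdry_plus_grid_def grid_node_def\<close>)
  then show ?thesis by blast
qed

lemma sum_open_grid_eq_sum_grid_nodes:
  assumes "h > 0"
  shows "(\<Sum>x\<in>open_grid h (of_int k * h) (of_int (k + int N) * h).
            (u x)\<^sup>2 / (dist_bdry (of_int k * h) (of_int (k + int N) * h) x)\<^sup>2)
       = (\<Sum>n\<in>{1..<N}. (u (grid_node h k n))\<^sup>2 / (min (real n) (real N - real n))\<^sup>2) / h\<^sup>2"
  unfolding open_grid_eq_grid_nodes[OF assms] sum_divide_distrib
proof (rule sum.reindex_cong[OF inj_on_subset[OF inj_grid_node subset_UNIV]])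
  fix n
  have "dist_bdry (of_int k * h) (of_int (k + int N) * h) (grid_node h k n)
          = h * min (real n) (real N - real n)"
    using assms by (simp add: dist_bdry_def grid_node_def algebra_simps min_mult_distrib_left)
  then show "(u (grid_node h k n))\<^sup>2 / (dist_bdry (of_int k * h) (of_int (k + int N) * h) (grid_node h k n))\<^sup>2
      = (u (grid_node h k n))\<^sup>2 / (min (real n) (real N - real n))\<^sup>2 / h\<^sup>2"
    by (simp add: power_mult_distrib)
qed (use assms in auto)

lemma sum_fwd_diff_eq_sum_grid_nodes:
  assumes "h > 0"
  shows "(\<Sum>x\<in>closed_grid h (of_int k * h) (of_int (k + int N) * h)
                - bdry_plus_grid (of_int (k + int N) * h). (fwd_diff h u x)\<^sup>2)
       = (\<Sum>n<N. (u (grid_node h k (Suc n)) - u (grid_node h k n))\<^sup>2) / h\<^sup>2"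
  unfolding closed_grid_minus_right_eq_grid_nodes[OF assms] sum_divide_distrib
  by (rule sum.reindex_cong[OF inj_on_subset[OF inj_grid_node subset_UNIV]])
     (use assms in \<open>auto simp: fwd_diff_def grid_node_Suc power_divide\<close>)

theorem mainTheorem19:
  fixes h a b :: real and k l :: int and u :: "real \<Rightarrow> real"
  assumes "h > 0" and "a = of_int k * h" and "b = of_int l * h" and "l - k > 1"
    and "u \<in> W012_0 h a b"
  shows "(\<Sum>x\<in>open_grid h a b. (u x)^2 / (dist_bdry a b x)^2)
           \<le> 4 * (\<Sum>x\<in>closed_grid h a b - bdry_plus_grid b. (fwd_diff h u x)^2)"
proof -
  define N where "N = nat (l - k)"
  have l: "l = k + int N"
    using assms(4) by (simp add: N_def)
  have "u (grid_node h k 0) = 0" and "u (grid_node h k N) = 0"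
    using assms(2,3,5) by (simp_all add: W012_0_def grid_node_def l)
  then have "(\<Sum>n\<in>{1..<N}. (u (grid_node h k n))\<^sup>2 / (min (real n) (real N - real n))\<^sup>2)
      \<le> 4 * (\<Sum>n<N. (u (grid_node h k (Suc n)) - u (grid_node h k n))\<^sup>2)"
    by (rule discrete_hardy_dirichlet)
  then show ?thesis
    unfolding assms(2,3) l sum_open_grid_eq_sum_grid_nodes[OF assms(1)]
      sum_fwd_diff_eq_sum_grid_nodes[OF assms(1)]
    by (simp add: divide_right_mono)
qed

end
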